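(* Let $A$ be a finite multiset of $n$ points in $\mathbb{R}^d$ with mean $\mu$, let $\varepsilon,\delta\in(0,1)$, $b>0$, $k=b\log\delta^{-1}$ and $r=\frac{1}{11}\sqrt{\frac{\varepsilon\,\mathrm{Opt}}{n}}$. Let $P=\{\hat\mu_1,\dots,\hat\mu_k\}\subset\mathbb{R}^d$ be points such that at least $\frac{7}{10}b\log\delta^{-1}$ indices $i$ satisfy $\|\hat\mu_i-\mu\|\le r$. If, at iteration $j$, Algorithm $\textsc{FastGD}(P)$ has a point $c_j$ with $\|c_j-\mu\|\le10r$, then $\|c_{j+1}-\mu\|\le11r$.
   Context: $\mu=\frac1n\sum_{p\in A}p$, $\mathrm{Opt}=\sum_{p\in A}\|p-\mu\|^2$. For $q\in\mathbb{R}^d$, $\nabla(q)=\sum_{i:\hat\mu_i\neq q}\frac{q-\hat\mu_i}{\|q-\hat\mu_i\|}$. Algorithm $\textsc{FastGD}(P)$: $c_0$ is the coordinate-wise median of $P$; for $j\ge1$, given $c_{j-1}$ compute $g=\nabla(c_{j-1})$, orthogonally project all points of $P$ onto the line $\{c_{j-1}-tg:t\in\mathbb{R}\}$, and let $c_j$ be a median of the projected points along this line. *)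

theory Defs
  imports "HOL-Analysis.Analysis" "HOL-Library.Multiset"
begin

definition mset_mean :: "('a::real_vector) multiset \<Rightarrow> 'a" where
  "mset_mean A = (1 / real (size A)) *\<^sub>R sum_mset A"

definition mset_opt :: "('a::real_normed_vector) multiset \<Rightarrow> real" where
  "mset_opt A = sum_mset (image_mset (\<lambda>p. (norm (p - mset_mean A))\<^sup>2) A)"

definition is_median :: "real list \<Rightarrow> real \<Rightarrow> bool" where
  "is_median xs m \<longleftrightarrow>
     length xs \<le> 2 * card {i. i < length xs \<and> xs ! i \<le> m} \<and>
     length xs \<le> 2 * card {i. i < length xs \<and> xs ! i \<ge> m}"

definition grad :: "('a::real_normed_vector) list \<Rightarrow> 'a \<Rightarrow> 'a" where
  "grad P q = (\<Sum>i\<in>{i. i < length P \<and> P ! i \<noteq> q}. (1 / norm (q - P ! i)) *\<^sub>R (q - P ! i))"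

definition coord_median :: "(real ^ 'd) list \<Rightarrow> real ^ 'd \<Rightarrow> bool" where
  "coord_median P c \<longleftrightarrow> (\<forall>i. is_median (map (\<lambda>p. p $ i) P) (c $ i))"

text \<open>One FastGD step: with g = grad P c, project every point of P onto the line
  {c - t g}; point p projects to c - t_p g with t_p = ((c - p) \<bullet> g) / \<parallel>g\<parallel>^2;
  the new point is c - t g for a median t of the projected parameters.
  (If g = 0 the line degenerates to {c}; then all t_p = 0 and the new point is c.)\<close>
definition fastgd_step :: "('a::real_inner) list \<Rightarrow> 'a \<Rightarrow> 'a \<Rightarrow> bool" where
  "fastgd_step P c c' \<longleftrightarrow>
     (let g = grad P c in
      \<exists>t. is_median (map (\<lambda>p. ((c - p) \<bullet> g) / (norm g)\<^sup>2) P) t \<and> c' = c - t *\<^sub>R g)"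

definition fastgd_run :: "(real ^ 'd) list \<Rightarrow> (nat \<Rightarrow> real ^ 'd) \<Rightarrow> bool" where
  "fastgd_run P c \<longleftrightarrow> coord_median P (c 0) \<and> (\<forall>j. fastgd_step P (c j) (c (Suc j)))"

end

theory Submission
  imports Defs
begin

text \<open>Let \<open>g\<close> be the gradient at \<open>c = c\<^sub>j\<close> and parametrise the line as \<open>c - t g\<close>. A point within
  distance \<open>r\<close> of \<open>\<mu>\<close> projects to a parameter within \<open>r / \<parallel>g\<parallel>\<close> of the parameter \<open>s\<close> of the
  projection of \<open>\<mu>\<close>. Since \<open>7/10 > 1/2\<close>, a strict majority of the points of \<open>P\<close> are of this
  kind, so every median \<open>t\<close> of the projected parameters also lies within \<open>r / \<parallel>g\<parallel>\<close> of \<open>s\<close>.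
  Hence \<open>c\<^sub>j\<^sub>+\<^sub>1 = c - t g\<close> is within \<open>r\<close> of the projection \<open>c - s g\<close> of \<open>\<mu>\<close>, which is no
  farther from \<open>\<mu>\<close> than the point \<open>c\<close> of the line is:
  \<open>\<parallel>c\<^sub>j\<^sub>+\<^sub>1 - \<mu>\<parallel> \<le> \<parallel>c - \<mu>\<parallel> + r \<le> 11 r\<close>.
  Besides the majority condition, the hypotheses enter only through \<open>|P| > 0\<close> (from \<open>b > 0\<close>
  and \<open>\<delta> < 1\<close>).\<close>

lemma norm_diff_projection_le:
  fixes v g :: "'a::real_inner"
  shows "norm (v - ((v \<bullet> g) / (norm g)\<^sup>2) *\<^sub>R g) \<le> norm v"
proof (cases "g = 0")
  case False
  then have g: "(norm g)\<^sup>2 > 0" by simp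
  define s where "s = (v \<bullet> g) / (norm g)\<^sup>2"
  have "(norm (v - s *\<^sub>R g))\<^sup>2 = (norm v)\<^sup>2 - 2 * s * (v \<bullet> g) + s\<^sup>2 * (norm g)\<^sup>2"
    by (simp only: power2_norm_eq_inner)
      (simp add: inner_diff_right inner_commute power2_eq_square algebra_simps)
  also have "\<dots> = (norm v)\<^sup>2 - (v \<bullet> g)\<^sup>2 / (norm g)\<^sup>2"
    using g by (simp add: s_def field_simps power2_eq_square)
  also have "\<dots> \<le> (norm v)\<^sup>2"
    using g by simp
  finally show ?thesis
    unfolding s_def by (rule power2_le_imp_le) simp
qed simp

lemma abs_inner_diff_div_le:
  fixes p q g :: "'a::real_inner"
  shows "\<bar>(p \<bullet> g) / (norm g)\<^sup>2 - (q \<bullet> g) / (norm g)\<^sup>2\<bar> \<le> norm (p - q) / norm g"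
proof (cases "g = 0")
  case False
  have "\<bar>(p \<bullet> g) / (norm g)\<^sup>2 - (q \<bullet> g) / (norm g)\<^sup>2\<bar> = \<bar>(p - q) \<bullet> g\<bar> / (norm g)\<^sup>2"
    by (simp add: inner_diff_left flip: diff_divide_distrib)
  also have "\<dots> \<le> norm (p - q) * norm g / (norm g)\<^sup>2"
    by (simp add: Cauchy_Schwarz_ineq2 divide_right_mono)
  also have "\<dots> = norm (p - q) / norm g"
    using False by (simp add: power2_eq_square)
  finally show ?thesis .
qed simp

lemma is_median_near_majority:
  assumes median: "is_median xs m"
    and majority: "length xs < 2 * card {i. i < length xs \<and> \<bar>xs ! i - a\<bar> \<le> e}"
  shows "\<bar>m - a\<bar> \<le> e"
proof (rule ccontr)
  define N where "N = {i. i < length xs \<and> \<bar>xs ! i - a\<bar> \<le> e}"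
  have disjoint_bound: "card S + card N \<le> length xs"
    if "S \<subseteq> {..<length xs}" "S \<inter> N = {}" for S
  proof -
    have "card S + card N = card (S \<union> N)"
      using that finite_subset by (intro card_Un_disjoint[symmetric]) (auto simp: N_def)
    also have "\<dots> \<le> card {..<length xs}"
      using that by (intro card_mono) (auto simp: N_def)
    finally show ?thesis by simp
  qed
  assume "\<not> \<bar>m - a\<bar> \<le> e"
  then consider "a + e < m" | "m < a - e" by linarith
  then show False
  proof cases
    case 1
    then have "card {i. i < length xs \<and> m \<le> xs ! i} + card N \<le> length xs"
      by (intro disjoint_bound) (auto simp: N_def)
    then show False using median majority unfolding is_median_def N_def by linarith
  next
    case 2
    then have "card {i. i < length xs \<and> xs ! i \<le> m} + card N \<le> length xs"
      by (intro disjoint_bound) (auto simp: N_def)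
    then show False using median majority unfolding is_median_def N_def by linarith
  qed
qed

lemma fastgd_step_dist_le:
  fixes P :: "'a::real_inner list"
  assumes step: "fastgd_step P c c'"
    and majority: "length P < 2 * card {i. i < length P \<and> norm (P ! i - \<mu>) \<le> r}"
  shows "norm (c' - \<mu>) \<le> norm (c - \<mu>) + r"
proof -
  define g where "g = grad P c"
  define param where "param p = ((c - p) \<bullet> g) / (norm g)\<^sup>2" for p
  define s where "s = param \<mu>"
  obtain t where median: "is_median (map param P) t" and c': "c' = c - t *\<^sub>R g"
    using step unfolding fastgd_step_def g_def param_def Let_def by blast
  have "{i. i < length P \<and> norm (P ! i - \<mu>) \<le> r} \<noteq> {}"
    using majority by (intro notI) simp
  then obtain i where "norm (P ! i - \<mu>) \<le> r"
    by blast
  then have r_nonneg: "0 \<le> r"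
    using norm_ge_zero order_trans by blast
  have near: "\<bar>param p - s\<bar> \<le> r / norm g" if "norm (p - \<mu>) \<le> r" for p
  proof -
    have "\<bar>param p - s\<bar> \<le> norm (p - \<mu>) / norm g"
      using abs_inner_diff_div_le[of "c - p" g "c - \<mu>"]
      by (simp add: param_def s_def norm_minus_commute[of \<mu> p])
    also have "\<dots> \<le> r / norm g"
      using that by (simp add: divide_right_mono)
    finally show ?thesis .
  qed
  have "{i. i < length P \<and> norm (P ! i - \<mu>) \<le> r}
          \<subseteq> {i. i < length (map param P) \<and> \<bar>map param P ! i - s\<bar> \<le> r / norm g}"
    using near by auto
  from card_mono[OF _ this] majority
  have "length (map param P)
          < 2 * card {i. i < length (map param P) \<and> \<bar>map param P ! i - s\<bar> \<le> r / norm g}"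
    by fastforce
  with median have "\<bar>t - s\<bar> \<le> r / norm g"
    by (rule is_median_near_majority)
  then have t_close: "norm ((s - t) *\<^sub>R g) \<le> r"
    using r_nonneg by (cases "g = 0") (auto simp: abs_minus_commute pos_le_divide_eq)
  have "c' - \<mu> = ((c - \<mu>) - s *\<^sub>R g) + (s - t) *\<^sub>R g"
    using c' by (simp add: algebra_simps)
  also have "norm \<dots> \<le> norm ((c - \<mu>) - s *\<^sub>R g) + norm ((s - t) *\<^sub>R g)"
    by (rule norm_triangle_ineq)
  also have "norm ((c - \<mu>) - s *\<^sub>R g) \<le> norm (c - \<mu>)"
    using norm_diff_projection_le[of "c - \<mu>" g] by (simp add: s_def param_def)
  finally show ?thesis using t_close by linarith
qed

theorem lemma3p4:
  fixes A :: "(real ^ 'd) multiset"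
    and P :: "(real ^ 'd) list"
    and c :: "nat \<Rightarrow> real ^ 'd"
    and \<epsilon> \<delta> b r :: real
    and j :: nat
  assumes "A \<noteq> {#}"
    and "0 < \<epsilon>" "\<epsilon> < 1" "0 < \<delta>" "\<delta> < 1" "0 < b"
    and "real (length P) = b * ln (1 / \<delta>)"
    and "r = (1 / 11) * sqrt (\<epsilon> * mset_opt A / real (size A))"
    and "real (card {i. i < length P \<and> norm (P ! i - mset_mean A) \<le> r})
           \<ge> (7 / 10) * b * ln (1 / \<delta>)"
    and "fastgd_run P c"
    and "norm (c j - mset_mean A) \<le> 10 * r"
  shows "norm (c (Suc j) - mset_mean A) \<le> 11 * r"
proof -
  have "0 < ln (1 / \<delta>)"
    using assms(4,5) by simp
  then have "0 < real (length P)"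
    using assms(6,7) by simp
  then have "length P < 2 * card {i. i < length P \<and> norm (P ! i - mset_mean A) \<le> r}"
    using assms(7,9) by linarith
  moreover have "fastgd_step P (c j) (c (Suc j))"
    using assms(10) unfolding fastgd_run_def by blast
  ultimately have "norm (c (Suc j) - mset_mean A) \<le> norm (c j - mset_mean A) + r"
    by (intro fastgd_step_dist_le)
  then show ?thesis
    using assms(11) by linarith
qed

end
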